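(* For every integer $k\ge1$ we have $I_k\subseteq B_k$.
   Context: Let $K$ be a field and $A$ the free associative (non-unital) $K$-algebra on free generators $x_0,x_1,x_2,\dots$, with $K$-basis of monomials; $A^1$ is $A$ with unity adjoined. For $n\ge1$, $A(n)$ is the $K$-span of monomials of length $n$, and $A(0)=K$. For a monomial $s=x_{i_1}\cdots x_{i_n}$ write $s[q]=x_{i_q}$. Let $D$ be the derivation of $A$ with $D(x_i)=x_{i+1}$. For $k\ge1$ let $\mathcal X_k=\{x_0,\dots,x_{k-1}\}$; for $n\ge1$ let $W(k,n,0)$ be the set of monomials of length $n$ all of whose letters lie in $\mathcal X_k$, $W(k,n,l+1)=\{D(w):w\in W(k,n,l)\}$, $W(k,n)=\bigcup_{t\ge0}W(k,n,t)$, and let $I_k$ be the two-sided ideal of $A$ generated by $W(k,2\cdot100^{k^2})$. $Z_k$ is the set of all elements $a\in A$ of one of the forms: (1) $a=\kappa s$, $\kappa\in K$, $s$ a monomial of length $100^{k^2}-1$ with $s[3^p\cdot100^{(k-1)^2}]=s[3^q\cdot100^{(k-1)^2}]$ for some $0\le p<q\le k$; (2) $a=\kappa(s_1+s_2)$, $\kappa\in K$, $s_1,s_2$ monomials of length $100^{k^2}-1$, with integers $0\le p<q\le k$ and $l_1>l_2\ge0$ such that $s_1$ has $x_{l_1}$ at position $3^p\cdot100^{(k-1)^2}$ and $x_{l_2}$ at position $3^q\cdot100^{(k-1)^2}$, $s_2$ has $x_{l_2}$ and $x_{l_1}$ at these positions respectively, and $s_1,s_2$ agree at all other positions. Finally $B_k=\sum_{m\ge0}A(m\cdot100^{k^2})\,Z_k\,A^1$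 (the $K$-span of products $uzv$ with $u\in A(m\cdot100^{k^2})$, $m\ge0$, $z\in Z_k$, $v\in A^1$). *)

theory Defs
  imports Main
begin

text \<open>Elements of the free associative algebra with unity adjoined, A^1, over a field K
  on generators x_0, x_1, ... are represented as finitely supported coefficient functions
  on words (nat lists); the word [i1,...,in] is the monomial x_i1 ... x_in and the empty
  word is the unit.  The non-unital algebra A consists of those with zero constant term.\<close>

type_synonym 'k fa = "nat list \<Rightarrow> 'k"

definition fsupp :: "'k::field fa \<Rightarrow> bool" where
  "fsupp f \<longleftrightarrow> finite {w. f w \<noteq> 0}"

definition A1 :: "'k::field fa set" where
  "A1 = {f. fsupp f}"

definition Aalg :: "'k::field fa set" where
  "Aalg = {f. fsupp f \<and> f [] = 0}"

definition mono :: "nat list \<Rightarrow> 'k::field fa" where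
  "mono s = (\<lambda>w. if w = s then 1 else 0)"

definition fadd :: "'k::field fa \<Rightarrow> 'k fa \<Rightarrow> 'k fa" where
  "fadd f g = (\<lambda>w. f w + g w)"

definition fscale :: "'k::field \<Rightarrow> 'k fa \<Rightarrow> 'k fa" where
  "fscale c f = (\<lambda>w. c * f w)"

definition fmult :: "'k::field fa \<Rightarrow> 'k fa \<Rightarrow> 'k fa" where
  "fmult f g = (\<lambda>w. \<Sum>i\<le>length w. f (take i w) * g (drop i w))"

definition Ahom :: "nat \<Rightarrow> 'k::field fa set" where
  "Ahom n = {f. fsupp f \<and> (\<forall>w. f w \<noteq> 0 \<longrightarrow> length w = n)}"

text \<open>The derivation D with D(x_i) = x_(i+1), extended by the Leibniz rule and linearity:
  D(x_i1...x_in) = sum over q of the word with the q-th index increased by one.\<close>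
definition Der :: "'k::field fa \<Rightarrow> 'k fa" where
  "Der f = (\<lambda>w. \<Sum>q\<in>{q. q < length w \<and> w ! q > 0}. f (w[q := w ! q - 1]))"

definition W0 :: "nat \<Rightarrow> nat \<Rightarrow> 'k::field fa set" where
  "W0 k n = {mono s | s. length s = n \<and> (\<forall>i\<in>set s. i < k)}"

definition Wl :: "nat \<Rightarrow> nat \<Rightarrow> nat \<Rightarrow> 'k::field fa set" where
  "Wl k n l = (Der ^^ l) ` W0 k n"

definition Wall :: "nat \<Rightarrow> nat \<Rightarrow> 'k::field fa set" where
  "Wall k n = (\<Union>t. Wl k n t)"

definition is_ideal :: "'k::field fa set \<Rightarrow> bool" where
  "is_ideal J \<longleftrightarrow> J \<subseteq> Aalg \<and> (\<lambda>_. 0) \<in> J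
     \<and> (\<forall>f\<in>J. \<forall>g\<in>J. fadd f g \<in> J)
     \<and> (\<forall>c f. f \<in> J \<longrightarrow> fscale c f \<in> J)
     \<and> (\<forall>a\<in>Aalg. \<forall>f\<in>J. fmult a f \<in> J \<and> fmult f a \<in> J)"

definition ideal_gen :: "'k::field fa set \<Rightarrow> 'k fa set" where
  "ideal_gen S = \<Inter>{J. is_ideal J \<and> S \<subseteq> J}"

definition Ik :: "nat \<Rightarrow> 'k::field fa set" where
  "Ik k = ideal_gen (Wall k (2 * 100 ^ (k\<^sup>2)))"

definition kspan :: "'k::field fa set \<Rightarrow> 'k fa set" where
  "kspan X = \<Inter>{V. (\<lambda>_. 0) \<in> V \<and> (\<forall>f\<in>V. \<forall>g\<in>V. fadd f g \<in> V)
                   \<and> (\<forall>c f. f \<in> V \<longrightarrow> fscale c f \<in> V) \<and> X \<subseteq> V}"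

text \<open>Positions are 1-based in the paper: s[q] = s ! (q - 1).\<close>
definition posk :: "nat \<Rightarrow> nat \<Rightarrow> nat" where
  "posk k p = 3 ^ p * 100 ^ ((k - 1)\<^sup>2)"

definition Zk :: "nat \<Rightarrow> 'k::field fa set" where
  "Zk k =
    {fscale \<kappa> (mono s) | \<kappa> s. length s = 100 ^ (k\<^sup>2) - 1 \<and>
       (\<exists>p q. p < q \<and> q \<le> k \<and> s ! (posk k p - 1) = s ! (posk k q - 1))}
    \<union>
    {fscale \<kappa> (fadd (mono s1) (mono s2)) | \<kappa> s1 s2. length s1 = 100 ^ (k\<^sup>2) - 1 \<and>
       length s2 = 100 ^ (k\<^sup>2) - 1 \<and>
       (\<exists>p q l1 l2. p < q \<and> q \<le> k \<and> l2 < l1 \<and>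
          s1 ! (posk k p - 1) = l1 \<and> s1 ! (posk k q - 1) = l2 \<and>
          s2 ! (posk k p - 1) = l2 \<and> s2 ! (posk k q - 1) = l1 \<and>
          (\<forall>i < length s1. i \<noteq> posk k p - 1 \<and> i \<noteq> posk k q - 1 \<longrightarrow> s1 ! i = s2 ! i))}"

definition Bk :: "nat \<Rightarrow> 'k::field fa set" where
  "Bk k = kspan {fmult (fmult u z) v | u z v m.
                   u \<in> Ahom (m * 100 ^ (k\<^sup>2)) \<and> z \<in> Zk k \<and> v \<in> A1}"

end

theory Submission
  imports Defs "HOL-Combinatorics.Transposition"
begin

text \<open>Let \<open>N = 100^(k^2)\<close>. The elements \<open>f \<in> A\<close> with \<open>x\<^sub>a f \<in> B\<^sub>k\<close> for every monomial
  \<open>x\<^sub>a\<close> (including \<open>x\<^sub>a = 1\<close>) form an ideal contained in \<open>B\<^sub>k\<close>, so it suffices to put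
  \<open>x\<^sub>a w\<close> into \<open>B\<^sub>k\<close> for every generator \<open>w = D\<^sup>t s\<close>, where \<open>s\<close> is a monomial of length
  \<open>2N\<close> in \<open>x\<^sub>0, \<dots>, x\<^sub>k\<^sub>-\<^sub>1\<close>. The block of positions \<open>mN + 1, \<dots>, mN + N - 1\<close>, with
  \<open>mN\<close> the first multiple of \<open>N\<close> after \<open>|a|\<close>, lies inside \<open>s\<close>; among its \<open>k + 1\<close>
  positions \<open>mN + 3^i 100^((k-1)^2)\<close>, \<open>i \<le> k\<close>, two carry the same letter of \<open>s\<close> by
  pigeonhole. Since \<open>D\<close> commutes with permutations of positions, \<open>x\<^sub>a D\<^sup>t s\<close> is invariant
  under exchanging these two positions. A homogeneous element with this symmetry is a
  combination of monomials with equal letters there and of sums of two monomials exchanged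
  by the symmetry, that is, of elements \<open>u z v\<close> with \<open>z \<in> Z\<^sub>k\<close> of type (1) or (2) and
  \<open>|u| = mN\<close>.\<close>

section \<open>Multiplication of coefficient functions\<close>

lemma fmult_mono_left:
  "fmult (mono a) g w = (if take (length a) w = a then g (drop (length a) w) else 0)"
proof -
  have "fmult (mono a) g w = (\<Sum>i\<le>length w. if i = length a then
          (if take (length a) w = a then g (drop (length a) w) else 0) else 0)"
    unfolding fmult_def mono_def by (rule sum.cong) auto
  then show ?thesis
    by (auto simp: sum.delta)
qed

lemma fmult_assoc: "fmult (fmult f g) h = fmult f (fmult g h)"
proof
  fix w :: "nat list"
  let ?n = "length w"
  let ?F = "\<lambda>j l. f (take j w) * g (take l (drop j w)) * h (drop (j + l) w)"
  have "fmult (fmult f g) h w = (\<Sum>i\<le>?n. \<Sum>j\<le>i. ?F j (i - j))"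
    unfolding fmult_def
    by (rule sum.cong) (auto simp: sum_distrib_right min_def take_drop intro!: sum.cong)
  also have "\<dots> = (\<Sum>(j, l)\<in>{(j, l). j + l \<le> ?n}. ?F j l)"
    by (rule sum.triangle_reindex_eq[symmetric])
  also have "\<dots> = (\<Sum>j\<le>?n. \<Sum>l\<le>?n - j. ?F j l)"
  proof -
    have "{(j, l). j + l \<le> ?n} = Sigma {..?n} (\<lambda>j. {..?n - j})"
      by auto
    then show ?thesis
      by (simp add: sum.Sigma)
  qed
  also have "\<dots> = fmult f (fmult g h) w"
    unfolding fmult_def
    by (rule sum.cong) (auto simp: sum_distrib_left mult.assoc add.commute intro!: sum.cong)
  finally show "fmult (fmult f g) h w = fmult f (fmult g h) w" .
qed

lemma fmult_fadd_left: "fmult (fadd f g) h = fadd (fmult f h) (fmult g h)"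
  unfolding fmult_def fadd_def by (auto simp: distrib_right sum.distrib)

lemma fmult_fadd_right: "fmult h (fadd f g) = fadd (fmult h f) (fmult h g)"
  unfolding fmult_def fadd_def by (auto simp: distrib_left sum.distrib)

lemma fmult_fscale_left: "fmult (fscale c f) h = fscale c (fmult f h)"
  unfolding fmult_def fscale_def by (auto simp: sum_distrib_left mult.assoc)

lemma fmult_fscale_right: "fmult h (fscale c f) = fscale c (fmult h f)"
  unfolding fmult_def fscale_def by (auto simp: sum_distrib_left mult.left_commute)

lemma fmult_zero_left: "fmult (\<lambda>_. 0) h = (\<lambda>_. 0)"
  unfolding fmult_def by auto

lemma fmult_zero_right: "fmult h (\<lambda>_. 0) = (\<lambda>_. 0)"
  unfolding fmult_def by auto

lemma fmult_mono_mono: "fmult (mono a) (mono b) = mono (a @ b)"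
proof
  fix w :: "nat list"
  have "(take (length a) w = a \<and> drop (length a) w = b) \<longleftrightarrow> w = a @ b"
    by (metis append_eq_conv_conj)
  then show "fmult (mono a) (mono b) w = mono (a @ b) w"
    unfolding fmult_mono_left by (auto simp: mono_def)
qed

lemma fmult_mono_Nil: "fmult (mono []) f = f"
  by (rule ext) (simp add: fmult_mono_left)

lemma fadd_commute: "fadd f g = fadd g f"
  unfolding fadd_def by (simp add: add.commute)

lemma fsupp_mono: "fsupp (mono s)"
  unfolding fsupp_def mono_def by auto

lemma fsupp_fadd: "fsupp f \<Longrightarrow> fsupp g \<Longrightarrow> fsupp (fadd f g)"
  unfolding fsupp_def fadd_def
  by (rule finite_subset[of _ "{w. f w \<noteq> 0} \<union> {w. g w \<noteq> 0}"]) auto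

lemma fsupp_fscale: "fsupp f \<Longrightarrow> fsupp (fscale c f)"
  unfolding fsupp_def fscale_def
  by (rule finite_subset[of _ "{w. f w \<noteq> 0}"]) auto

lemma fsupp_fmult:
  assumes "fsupp f" "fsupp g"
  shows "fsupp (fmult f g)"
proof -
  let ?S = "(\<lambda>(x, y). x @ y) ` ({w. f w \<noteq> 0} \<times> {w. g w \<noteq> 0})"
  have "{w. fmult f g w \<noteq> 0} \<subseteq> ?S"
  proof
    fix w
    assume "w \<in> {w. fmult f g w \<noteq> 0}"
    then have "(\<Sum>i\<le>length w. f (take i w) * g (drop i w)) \<noteq> 0"
      unfolding fmult_def by simp
    then obtain i where "f (take i w) * g (drop i w) \<noteq> 0"
      by (meson sum.not_neutral_contains_not_neutral)
    then show "w \<in> ?S"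
      by (auto intro!: image_eqI[where x = "(take i w, drop i w)"])
  qed
  moreover have "finite ?S"
    using assms unfolding fsupp_def by blast
  ultimately show ?thesis
    unfolding fsupp_def by (rule finite_subset)
qed

lemma mono_Ahom: "length u = n \<Longrightarrow> mono u \<in> Ahom n"
  unfolding Ahom_def using fsupp_mono[of u] by (auto simp: mono_def)

lemma mono_A1: "mono u \<in> A1"
  unfolding A1_def by (simp add: fsupp_mono)

lemma Aalg_subset_A1: "Aalg \<subseteq> A1"
  unfolding Aalg_def A1_def by auto

lemma Aalg_fmult: "f \<in> Aalg \<Longrightarrow> g \<in> Aalg \<Longrightarrow> fmult f g \<in> Aalg"
  unfolding Aalg_def by (simp add: fsupp_fmult) (simp add: fmult_def)

lemma Ahom_subset_Aalg: "0 < n \<Longrightarrow> Ahom n \<subseteq> Aalg"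
  unfolding Ahom_def Aalg_def by force

lemma fmult_mono_Ahom:
  assumes "f \<in> Ahom n"
  shows "fmult (mono a) f \<in> Ahom (length a + n)"
proof -
  have "length w = length a + n" if "fmult (mono a) f w \<noteq> 0" for w
  proof -
    from that have a: "take (length a) w = a" and "f (drop (length a) w) \<noteq> 0"
      unfolding fmult_mono_left by (auto split: if_splits)
    then have "length (drop (length a) w) = n"
      using assms unfolding Ahom_def by blast
    moreover have "length a \<le> length w"
      using arg_cong[OF a, of length] by (simp add: min_def split: if_splits)
    ultimately show ?thesis
      by simp
  qed
  moreover have "fsupp (fmult (mono a) f)"
    using assms unfolding Ahom_def by (simp add: fsupp_fmult fsupp_mono)
  ultimately show ?thesis
    unfolding Ahom_def by blast
qed

section \<open>Subspaces and ideals\<close>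

definition fa_subspace :: "'k::field fa set \<Rightarrow> bool" where
  "fa_subspace V \<longleftrightarrow> (\<lambda>_. 0) \<in> V \<and> (\<forall>f\<in>V. \<forall>g\<in>V. fadd f g \<in> V)
                     \<and> (\<forall>c f. f \<in> V \<longrightarrow> fscale c f \<in> V)"

lemma kspan_eq: "kspan X = \<Inter>{V. fa_subspace V \<and> X \<subseteq> V}"
  unfolding kspan_def fa_subspace_def by auto

lemma fa_subspace_kspan: "fa_subspace (kspan X)"
  unfolding kspan_eq fa_subspace_def by auto

lemma kspan_least: "fa_subspace V \<Longrightarrow> X \<subseteq> V \<Longrightarrow> kspan X \<subseteq> V"
  unfolding kspan_eq by auto

lemma kspan_superset: "X \<subseteq> kspan X"
  unfolding kspan_eq by auto

lemma fa_subspace_fmult_left_preimage: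
  "fa_subspace V \<Longrightarrow> fa_subspace {h. fmult h f \<in> V}"
  unfolding fa_subspace_def by (simp add: fmult_zero_left fmult_fadd_left fmult_fscale_left)

lemma fa_subspace_fmult_right_preimage:
  "fa_subspace V \<Longrightarrow> fa_subspace {h. fmult f h \<in> V}"
  unfolding fa_subspace_def by (simp add: fmult_zero_right fmult_fadd_right fmult_fscale_right)

lemma fa_subspace_involution_invariant:
  fixes G :: "'k::field fa"
  assumes V: "fa_subspace V" and "fsupp G"
    and \<sigma>: "\<And>x. \<sigma> (\<sigma> x) = x" and invariant: "\<And>x. G (\<sigma> x) = G x"
    and orbit: "\<And>x. G x \<noteq> 0 \<Longrightarrow>
       fscale (G x) (if \<sigma> x = x then mono x else fadd (mono x) (mono (\<sigma> x))) \<in> V"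
  shows "G \<in> V"
proof -
  have V_zero: "(\<lambda>_. 0) \<in> V" and V_add: "\<And>f g. f \<in> V \<Longrightarrow> g \<in> V \<Longrightarrow> fadd f g \<in> V"
    using V unfolding fa_subspace_def by blast+
  have "G \<in> V" if "finite S" "{w. G w \<noteq> 0} \<subseteq> S" "\<And>x. G (\<sigma> x) = G x"
    "\<And>x. G x \<noteq> 0 \<Longrightarrow>
       fscale (G x) (if \<sigma> x = x then mono x else fadd (mono x) (mono (\<sigma> x))) \<in> V"
    for S and G :: "'k fa"
    using that
  proof (induction S arbitrary: G rule: finite_induct)
    case empty
    then have "G = (\<lambda>_. 0)"
      by auto
    then show ?case
      using V_zero by simp
  next
    case (insert x S)
    let ?R = "fscale (G x) (if \<sigma> x = x then mono x else fadd (mono x) (mono (\<sigma> x)))"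
    let ?G' = "\<lambda>y. if y = x \<or> y = \<sigma> x then 0 else G y"
    have G': "?G' \<in> V"
    proof (rule insert.IH)
      show "{w. ?G' w \<noteq> 0} \<subseteq> S"
        using insert.prems(1) by auto
      have "\<sigma> y = x \<longleftrightarrow> y = \<sigma> x" "\<sigma> y = \<sigma> x \<longleftrightarrow> y = x" for y
        using \<sigma> by metis+
      then show "?G' (\<sigma> y) = ?G' y" for y
        using insert.prems(2)[of y] by auto
      show "?G' y \<noteq> 0 \<Longrightarrow> fscale (?G' y)
              (if \<sigma> y = y then mono y else fadd (mono y) (mono (\<sigma> y))) \<in> V" for y
        using insert.prems(3)[of y] by (auto split: if_splits)
    qed
    have "?R \<in> V"
    proof (cases "G x = 0")
      case True
      then show ?thesis
        using V_zero by (simp add: fscale_def)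
    next
      case False
      then show ?thesis
        by (rule insert.prems(3))
    qed
    with G' have "fadd ?G' ?R \<in> V"
      by (rule V_add)
    moreover have "fadd ?G' ?R = G"
      using insert.prems(2)[of x] by (auto simp: fun_eq_iff fadd_def fscale_def mono_def \<sigma>)
    ultimately show ?case
      by simp
  qed
  then show ?thesis
    using assms unfolding fsupp_def by blast
qed

lemma fa_subspace_fsupp:
  assumes "fa_subspace V" "\<And>w. mono w \<in> V" "fsupp f"
  shows "f \<in> V"
  using fa_subspace_involution_invariant[where \<sigma> = id, OF assms(1,3)] assms(1,2)
  unfolding fa_subspace_def by simp

lemma fa_subspace_Aalg: "fa_subspace Aalg"
  unfolding fa_subspace_def Aalg_def
  by (simp add: fsupp_fadd fsupp_fscale) (simp add: fsupp_def fadd_def fscale_def)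

lemma is_idealI:
  assumes "J \<subseteq> Aalg" "fa_subspace J"
    and "\<And>a f. a \<in> Aalg \<Longrightarrow> f \<in> J \<Longrightarrow> fmult a f \<in> J"
    and "\<And>a f. a \<in> Aalg \<Longrightarrow> f \<in> J \<Longrightarrow> fmult f a \<in> J"
  shows "is_ideal J"
  using assms unfolding is_ideal_def fa_subspace_def by blast

lemma is_ideal_left_monomial_stable:
  assumes B: "fa_subspace B" and right: "\<And>b g. b \<in> B \<Longrightarrow> g \<in> Aalg \<Longrightarrow> fmult b g \<in> B"
  shows "is_ideal {f \<in> Aalg. \<forall>a. fmult (mono a) f \<in> B}" (is "is_ideal ?J")
proof -
  have "fa_subspace ?J"
  proof -
    have "?J = Aalg \<inter> (\<Inter>a. {f. fmult (mono a) f \<in> B})"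
      by auto
    then show ?thesis
      using fa_subspace_Aalg fa_subspace_fmult_right_preimage[OF B] unfolding fa_subspace_def by auto
  qed
  moreover have "fmult a f \<in> ?J" if "a \<in> Aalg" "f \<in> ?J" for a f
  proof -
    have "fmult a f \<in> Aalg"
      using that by (simp add: Aalg_fmult)
    moreover have "fmult (mono b) a \<in> {h. fmult h f \<in> B}" for b
    proof (rule fa_subspace_fsupp[OF fa_subspace_fmult_left_preimage[OF B]])
      show "mono w \<in> {h. fmult h f \<in> B}" for w
        using that(2) by simp
      show "fsupp (fmult (mono b) a)"
        using that(1) unfolding Aalg_def by (simp add: fsupp_fmult fsupp_mono)
    qed
    ultimately show ?thesis
      by (simp add: fmult_assoc)
  qed
  moreover have "fmult f a \<in> ?J" if "a \<in> Aalg" "f \<in> ?J" for a f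
  proof -
    have "fmult f a \<in> Aalg"
      using that by (simp add: Aalg_fmult)
    moreover have "fmult (fmult (mono b) f) a \<in> B" for b
      using that right by blast
    ultimately show ?thesis
      by (simp add: fmult_assoc)
  qed
  ultimately show ?thesis
    by (intro is_idealI) auto
qed

section \<open>Exchanging two positions of a word; the derivation \<open>D\<close>\<close>

definition swap_positions :: "nat \<Rightarrow> nat \<Rightarrow> nat list \<Rightarrow> nat list" where
  "swap_positions P Q x = (if P < length x \<and> Q < length x then x[P := x ! Q, Q := x ! P] else x)"

lemma length_swap_positions [simp]: "length (swap_positions P Q x) = length x"
  unfolding swap_positions_def by auto

lemma swap_positions_involutory [simp]: "swap_positions P Q (swap_positions P Q x) = x"
  unfolding swap_positions_def by (auto intro!: nth_equalityI simp: nth_list_update)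

lemma nth_swap_positions:
  "P < length x \<Longrightarrow> Q < length x \<Longrightarrow> i < length x \<Longrightarrow>
    swap_positions P Q x ! i = x ! Transposition.transpose P Q i"
  unfolding swap_positions_def Transposition.transpose_def by (auto simp: nth_list_update)

lemma swap_positions_id: "x ! P = x ! Q \<Longrightarrow> swap_positions P Q x = x"
  unfolding swap_positions_def by (metis list_update_id)

lemma swap_positions_list_update:
  assumes "P < length x" "Q < length x" "i < length x"
  shows "(swap_positions P Q x)[i := v] = swap_positions P Q (x[Transposition.transpose P Q i := v])"
  using assms unfolding swap_positions_def Transposition.transpose_def
  by (auto intro!: nth_equalityI simp: nth_list_update)

lemma swap_positions_append:
  assumes "length u = r" "P < length s" "Q < length s"
  shows "swap_positions (r + P) (r + Q) (u @ s @ v) = u @ swap_positions P Q s @ v"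
  using assms unfolding swap_positions_def
  by (auto intro!: nth_equalityI simp: nth_append nth_list_update)

lemma mono_swap_invariant:
  assumes "s ! P = s ! Q"
  shows "mono s (swap_positions P Q y) = mono s y"
proof -
  have "swap_positions P Q y = s \<longleftrightarrow> y = s"
    using swap_positions_id[OF assms] swap_positions_involutory by metis
  then show ?thesis
    unfolding mono_def by simp
qed

lemma fmult_mono_swap_invariant:
  assumes "\<And>y. f (swap_positions P Q y) = f y"
  shows "fmult (mono a) f (swap_positions (length a + P) (length a + Q) x) = fmult (mono a) f x"
proof -
  have "take (length a) (swap_positions (length a + P) (length a + Q) x) = take (length a) x"
    unfolding swap_positions_def by (auto simp: take_update_cancel)
  moreover have "drop (length a) (swap_positions (length a + P) (length a + Q) x)
      = swap_positions P Q (drop (length a) x)"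
    unfolding swap_positions_def by (auto intro!: nth_equalityI simp: nth_list_update)
  ultimately show ?thesis
    unfolding fmult_mono_left by (simp add: assms)
qed

lemma Der_nonzero:
  assumes "Der f x \<noteq> 0"
  obtains q where "q < length x" "x ! q > 0" "f (x[q := x ! q - 1]) \<noteq> 0"
proof -
  from assms have "(\<Sum>q\<in>{q. q < length x \<and> x ! q > 0}. f (x[q := x ! q - 1])) \<noteq> 0"
    unfolding Der_def by simp
  then show ?thesis
    using that sum.not_neutral_contains_not_neutral by blast
qed

lemma Der_swap_invariant:
  assumes invariant: "\<And>y. f (swap_positions P Q y) = f y"
  shows "Der f (swap_positions P Q x) = Der f x"
proof (cases "P < length x \<and> Q < length x")
  case False
  then show ?thesis
    unfolding swap_positions_def by auto
next
  case True
  let ?\<tau> = "Transposition.transpose P Q" and ?x' = "swap_positions P Q x"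
  have \<tau>_less: "?\<tau> i < length x" if "i < length x" for i
    using True that by (simp add: Transposition.transpose_def)
  have "Der f ?x' = (\<Sum>i\<in>{i. i < length x \<and> ?x' ! i > 0}. f (?x'[i := ?x' ! i - 1]))"
    unfolding Der_def by simp
  also have "\<dots> = (\<Sum>i\<in>{i. i < length x \<and> x ! i > 0}. f (x[i := x ! i - 1]))"
  proof (rule sum.reindex_bij_witness[where i = ?\<tau> and j = ?\<tau>])
    fix i
    assume i: "i \<in> {i. i < length x \<and> ?x' ! i > 0}"
    show "?\<tau> (?\<tau> i) = i"
      by simp
    show "?\<tau> i \<in> {i. i < length x \<and> x ! i > 0}"
      using i True \<tau>_less[of i] nth_swap_positions[where x = x and i = i] by simp
    show "f (x[?\<tau> i := x ! ?\<tau> i - 1]) = f (?x'[i := ?x' ! i - 1])"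
      using i True by (simp add: nth_swap_positions swap_positions_list_update invariant)
  next
    fix i
    assume i: "i \<in> {i. i < length x \<and> x ! i > 0}"
    show "?\<tau> (?\<tau> i) = i"
      by simp
    show "?\<tau> i \<in> {i. i < length x \<and> ?x' ! i > 0}"
      using i True \<tau>_less[of i] nth_swap_positions[where x = x and i = "?\<tau> i"] by simp
  qed
  also have "\<dots> = Der f x"
    unfolding Der_def by simp
  finally show ?thesis .
qed

lemma Der_Ahom:
  assumes "f \<in> Ahom n"
  shows "Der f \<in> Ahom n"
proof -
  let ?S = "{w. f w \<noteq> 0}"
  let ?raise = "\<lambda>v. (\<lambda>q. v[q := v ! q + 1]) ` {..<length v}"
  have "{x. Der f x \<noteq> 0} \<subseteq> (\<Union>v\<in>?S. ?raise v)"
  proof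
    fix x
    assume "x \<in> {x. Der f x \<noteq> 0}"
    then obtain q where q: "q < length x" "x ! q > 0" "f (x[q := x ! q - 1]) \<noteq> 0"
      using Der_nonzero by blast
    let ?v = "x[q := x ! q - 1]"
    have "?v[q := ?v ! q + 1] = x"
      using q by (auto intro!: nth_equalityI simp: nth_list_update)
    then show "x \<in> (\<Union>v\<in>?S. ?raise v)"
      using q by (auto intro!: bexI[where x = ?v] image_eqI[where x = q])
  qed
  moreover have "finite (\<Union>v\<in>?S. ?raise v)"
    using assms unfolding Ahom_def fsupp_def by auto
  ultimately have "fsupp (Der f)"
    unfolding fsupp_def by (rule finite_subset)
  moreover have "length x = n" if nonzero: "Der f x \<noteq> 0" for x
  proof -
    obtain q where "f (x[q := x ! q - 1]) \<noteq> 0"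
      using Der_nonzero[OF nonzero] by blast
    then have "length (x[q := x ! q - 1]) = n"
      using assms unfolding Ahom_def by blast
    then show ?thesis
      by simp
  qed
  ultimately show ?thesis
    unfolding Ahom_def by blast
qed

lemma Der_pow_Ahom: "f \<in> Ahom n \<Longrightarrow> (Der ^^ t) f \<in> Ahom n"
  by (induction t) (simp_all add: Der_Ahom)

lemma Der_pow_swap_invariant:
  "(\<And>y. f (swap_positions P Q y) = f y) \<Longrightarrow>
    (Der ^^ t) f (swap_positions P Q x) = (Der ^^ t) f x"
  by (induction t arbitrary: x) (simp_all add: Der_swap_invariant)

lemma Wall_Ahom: "w \<in> Wall k n \<Longrightarrow> w \<in> Ahom n"
  unfolding Wall_def Wl_def W0_def by (auto intro: Der_pow_Ahom mono_Ahom)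

section \<open>Elements of \<open>B\<^sub>k\<close>\<close>

lemma fa_subspace_Bk: "fa_subspace (Bk k)"
  unfolding Bk_def by (rule fa_subspace_kspan)

lemma Bk_generator:
  "u \<in> Ahom (m * 100 ^ (k\<^sup>2)) \<Longrightarrow> z \<in> Zk k \<Longrightarrow> v \<in> A1 \<Longrightarrow> fmult (fmult u z) v \<in> Bk k"
  unfolding Bk_def by (rule subsetD[OF kspan_superset]) blast

lemma Bk_fmult_right:
  assumes "b \<in> Bk k" "g \<in> A1"
  shows "fmult b g \<in> Bk k"
proof -
  have "fmult v g \<in> A1" if "v \<in> A1" for v :: "'a fa"
    using assms(2) that unfolding A1_def by (simp add: fsupp_fmult)
  then have "fmult (fmult (fmult u z) v) g \<in> Bk k"
    if "u \<in> Ahom (m * 100 ^ (k\<^sup>2))" "z \<in> Zk k" "v \<in> A1" for u z v m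
    using Bk_generator[OF that(1,2)] that(3) by (simp add: fmult_assoc)
  then have "{fmult (fmult u z) v | u z v m. u \<in> Ahom (m * 100 ^ (k\<^sup>2)) \<and> z \<in> Zk k \<and> v \<in> A1}
      \<subseteq> {b. fmult b g \<in> Bk k}"
    by blast
  then have "Bk k \<subseteq> {b. fmult b g \<in> Bk k}"
    by (subst (1) Bk_def) (rule kspan_least[OF fa_subspace_fmult_left_preimage[OF fa_subspace_Bk]])
  then show ?thesis
    using assms(1) by blast
qed

lemma posk_ge_1: "1 \<le> posk k p"
  unfolding posk_def by simp

lemma posk_bounds:
  assumes "k \<ge> 1" "p < q" "q \<le> k"
  shows "posk k p < posk k q" "posk k q < 100 ^ (k\<^sup>2)"
proof -
  have pos: "(0::nat) < 100 ^ ((k - 1)\<^sup>2)"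
    by simp
  have "(3::nat) ^ p < 3 ^ q"
    using assms(2) by (simp add: power_strict_increasing)
  then show "posk k p < posk k q"
    unfolding posk_def using pos by simp
  have "(3::nat) ^ q \<le> 3 ^ k"
    using assms(3) by (simp add: power_increasing)
  also have "\<dots> < 100 ^ k"
    using assms(1) by (simp add: power_strict_mono)
  also have "\<dots> \<le> 100 ^ (2 * k - 1)"
    using assms(1) by (intro power_increasing) auto
  finally have "(3::nat) ^ q < 100 ^ (2 * k - 1)" .
  then have "posk k q < 100 ^ (2 * k - 1) * 100 ^ ((k - 1)\<^sup>2)"
    unfolding posk_def using pos by simp
  also have "\<dots> = 100 ^ (k\<^sup>2)"
    using assms(1) by (cases k) (auto simp: power2_eq_square simp flip: power_add)
  finally show "posk k q < 100 ^ (k\<^sup>2)" .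
qed

lemma Zk_type1I:
  assumes "length s = 100 ^ (k\<^sup>2) - 1" "p < q" "q \<le> k"
    and "s ! (posk k p - 1) = s ! (posk k q - 1)"
  shows "fscale c (mono s) \<in> Zk k"
  unfolding Zk_def using assms by blast

lemma Zk_type2I:
  assumes k: "k \<ge> 1" and s: "length s = 100 ^ (k\<^sup>2) - 1" and pq: "p < q" "q \<le> k"
    and gt: "s ! (posk k p - 1) > s ! (posk k q - 1)"
  shows "fscale c (fadd (mono s) (mono (swap_positions (posk k p - 1) (posk k q - 1) s))) \<in> Zk k"
proof -
  let ?P = "posk k p - 1" and ?Q = "posk k q - 1"
  let ?s' = "swap_positions ?P ?Q s"
  have P: "?P < length s" and Q: "?Q < length s" and PQ: "?P \<noteq> ?Q"
    using posk_bounds[OF k pq] posk_ge_1[of k p] s by auto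
  have "?s' ! ?P = s ! ?Q" "?s' ! ?Q = s ! ?P"
    "\<forall>i < length s. i \<noteq> ?P \<and> i \<noteq> ?Q \<longrightarrow> s ! i = ?s' ! i"
    using P Q by (simp_all add: nth_swap_positions)
  moreover have "length ?s' = 100 ^ (k\<^sup>2) - 1"
    using s by simp
  ultimately show ?thesis
    unfolding Zk_def using s pq gt by blast
qed

lemma Bk_orbit_sum:
  fixes c :: "'k::field" and u s v :: "nat list"
  assumes k: "k \<ge> 1" and pq: "p < q" "q \<le> k"
    and u: "length u = m * 100 ^ (k\<^sup>2)" and s: "length s = 100 ^ (k\<^sup>2) - 1"
  defines "\<sigma> \<equiv> swap_positions (m * 100 ^ (k\<^sup>2) + (posk k p - 1)) (m * 100 ^ (k\<^sup>2) + (posk k q - 1))"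
  shows "fscale c (if \<sigma> (u @ s @ v) = u @ s @ v then mono (u @ s @ v)
           else fadd (mono (u @ s @ v)) (mono (\<sigma> (u @ s @ v)))) \<in> Bk k"
proof -
  let ?P = "posk k p - 1" and ?Q = "posk k q - 1"
  let ?swap = "swap_positions ?P ?Q"
  have P: "?P < length s" and Q: "?Q < length s"
    using posk_bounds[OF k pq] posk_ge_1[of k p] s by auto
  have \<sigma>: "\<sigma> (u @ s1 @ v) = u @ ?swap s1 @ v" if "length s1 = length s" for s1
    unfolding \<sigma>_def using swap_positions_append[OF u] P Q that by simp
  have uzv: "fmult (fmult (mono u) z) (mono v) \<in> Bk k" if "z \<in> Zk k" for z :: "'k fa"
    using Bk_generator[OF mono_Ahom[OF u] that mono_A1] .
  have type2: "fscale c (fadd (mono (u @ s1 @ v)) (mono (u @ ?swap s1 @ v))) \<in> Bk k"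
    if s1: "length s1 = length s" "s1 ! ?P > s1 ! ?Q" for s1
    using uzv[OF Zk_type2I[OF k _ pq, of s1 c]] s s1
    by (simp add: fmult_fscale_left fmult_fscale_right fmult_fadd_left fmult_fadd_right
        fmult_mono_mono)
  consider (eq) "s ! ?P = s ! ?Q" | (gt) "s ! ?P > s ! ?Q" | (lt) "s ! ?P < s ! ?Q"
    by linarith
  then show ?thesis
  proof cases
    case eq
    then have "fscale c (mono (u @ s @ v)) \<in> Bk k"
      using uzv[OF Zk_type1I[OF s pq eq, of c]]
      by (simp add: fmult_fscale_left fmult_fscale_right fmult_mono_mono)
    then show ?thesis
      using eq by (simp add: \<sigma> swap_positions_id)
  next
    case gt
    then have "?swap s ! ?P \<noteq> s ! ?P"
      using P Q by (simp add: nth_swap_positions)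
    then show ?thesis
      using type2[OF refl gt] by (auto simp: \<sigma>)
  next
    case lt
    let ?s' = "?swap s"
    have s': "length ?s' = length s" "?s' ! ?P > ?s' ! ?Q"
      using lt P Q by (simp_all add: nth_swap_positions)
    then have "?s' \<noteq> s"
      using lt by auto
    then show ?thesis
      using type2[OF s'] by (simp add: \<sigma> fadd_commute)
  qed
qed

lemma swap_invariant_Bk:
  fixes G :: "'k::field fa" and k p q m L :: nat
  defines "\<sigma> \<equiv> swap_positions (m * 100 ^ (k\<^sup>2) + (posk k p - 1)) (m * 100 ^ (k\<^sup>2) + (posk k q - 1))"
  assumes k: "k \<ge> 1" and pq: "p < q" "q \<le> k"
    and G: "G \<in> Ahom L" and L: "m * 100 ^ (k\<^sup>2) + (100 ^ (k\<^sup>2) - 1) \<le> L"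
    and invariant: "\<And>x. G (\<sigma> x) = G x"
  shows "G \<in> Bk k"
proof (rule fa_subspace_involution_invariant[where G = G and \<sigma> = \<sigma>, OF fa_subspace_Bk _ _ invariant])
  show "fsupp G"
    using G unfolding Ahom_def by blast
  show "\<sigma> (\<sigma> x) = x" for x
    unfolding \<sigma>_def by simp
  fix x
  assume "G x \<noteq> 0"
  then have "length x = L"
    using G unfolding Ahom_def by blast
  then have "m * 100 ^ (k\<^sup>2) \<le> length x"
    and "100 ^ (k\<^sup>2) - 1 \<le> length x - m * 100 ^ (k\<^sup>2)"
    using L by linarith+
  then have "length (take (m * 100 ^ (k\<^sup>2)) x) = m * 100 ^ (k\<^sup>2)"
    and "length (take (100 ^ (k\<^sup>2) - 1) (drop (m * 100 ^ (k\<^sup>2)) x)) = 100 ^ (k\<^sup>2) - 1"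
    by (simp_all add: min_absorb1 min_absorb2)
  moreover have "x = take (m * 100 ^ (k\<^sup>2)) x @ take (100 ^ (k\<^sup>2) - 1) (drop (m * 100 ^ (k\<^sup>2)) x)
      @ drop (100 ^ (k\<^sup>2) - 1) (drop (m * 100 ^ (k\<^sup>2)) x)"
    by (simp only: append_take_drop_id)
  ultimately show "fscale (G x) (if \<sigma> x = x then mono x else fadd (mono x) (mono (\<sigma> x))) \<in> Bk k"
    unfolding \<sigma>_def using Bk_orbit_sum[OF k pq] by metis
qed

section \<open>The generators of \<open>I\<^sub>k\<close>\<close>

lemma repeated_letter_at_posk:
  assumes k: "k \<ge> 1" and letters: "\<forall>i\<in>set s. i < k" and j: "j + (100 ^ (k\<^sup>2) - 1) \<le> length s"
  obtains p q where "p < q" "q \<le> k" "s ! (j + (posk k p - 1)) = s ! (j + (posk k q - 1))"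
proof -
  define f where "f i = s ! (j + (posk k i - 1))" for i
  have "f ` {0..k} \<subseteq> {0..<k}"
  proof
    fix y
    assume "y \<in> f ` {0..k}"
    then obtain i where i: "i \<le> k" "y = f i"
      by auto
    have "posk k i < 100 ^ (k\<^sup>2)"
      using posk_bounds[OF k, of 0 k] posk_bounds[OF k, of i k] i k by (cases "i = k") auto
    then have "j + (posk k i - 1) < length s"
      using j posk_ge_1[of k i] by linarith
    then show "y \<in> {0..<k}"
      using letters i unfolding f_def by (auto simp: nth_mem)
  qed
  then have "card (f ` {0..k}) \<le> k"
    using card_mono[of "{0..<k}" "f ` {0..k}"] by simp
  then have "\<not> inj_on f {0..k}"
    by (intro pigeonhole) simp
  then obtain i1 i2 where "i1 \<le> k" "i2 \<le> k" "i1 \<noteq> i2" "f i1 = f i2"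
    unfolding inj_on_def by auto
  then show ?thesis
    using that[of "min i1 i2" "max i1 i2"] unfolding f_def
    by (cases "i1 \<le> i2") (auto simp: min_def max_def)
qed

text \<open>The block for the left factor \<open>x\<^sub>a\<close> starts at the first multiple \<open>mN \<ge> |a|\<close>; since
  \<open>mN - |a| \<le> N - 1\<close>, it lies within the generator.\<close>

lemma fmult_mono_Wall_Bk:
  fixes w :: "'k::field fa"
  assumes k: "k \<ge> 1" and w: "w \<in> Wall k (2 * 100 ^ (k\<^sup>2))"
  shows "fmult (mono a) w \<in> Bk k"
proof -
  let ?N = "(100::nat) ^ (k\<^sup>2)" and ?r = "length a"
  obtain t s where ws: "w = (Der ^^ t) (mono s)" and ls: "length s = 2 * ?N"
    and letters: "\<forall>i\<in>set s. i < k"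
    using w unfolding Wall_def Wl_def W0_def by blast
  define m where "m = (?r + ?N - 1) div ?N"
  have "m * ?N + (?r + ?N - 1) mod ?N = ?r + ?N - 1"
    unfolding m_def by (rule div_mult_mod_eq)
  moreover have "(?r + ?N - 1) mod ?N < ?N"
    by simp
  ultimately have m: "?r \<le> m * ?N" "m * ?N \<le> ?r + ?N - 1"
    by linarith+
  define j where "j = m * ?N - ?r"
  have j: "j + (?N - 1) \<le> length s" "?r + j = m * ?N"
    using m ls unfolding j_def by auto
  obtain p q where pq: "p < q" "q \<le> k" and eq: "s ! (j + (posk k p - 1)) = s ! (j + (posk k q - 1))"
    using repeated_letter_at_posk[OF k letters j(1)] .
  have w_invariant: "w (swap_positions (j + (posk k p - 1)) (j + (posk k q - 1)) y) = w y" for y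
    unfolding ws by (rule Der_pow_swap_invariant) (rule mono_swap_invariant[OF eq])
  have "?r + (j + (posk k i - 1)) = m * ?N + (posk k i - 1)" for i
    by (simp add: j(2)[symmetric])
  then have invariant:
    "fmult (mono a) w (swap_positions (m * ?N + (posk k p - 1)) (m * ?N + (posk k q - 1)) x)
      = fmult (mono a) w x" for x
    using fmult_mono_swap_invariant[where f = w and a = a, OF w_invariant, of x] by metis
  have "fmult (mono a) w \<in> Ahom (?r + 2 * ?N)"
    using fmult_mono_Ahom Wall_Ahom w by blast
  moreover have "m * ?N + (?N - 1) \<le> ?r + 2 * ?N"
    using m by linarith
  ultimately show ?thesis
    by (rule swap_invariant_Bk[where G = "fmult (mono a) w" and m = m, OF k pq _ _ invariant])
qed

theorem mainTheorem4:
  fixes k :: nat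
  assumes "k \<ge> 1"
  shows "(Ik k :: 'k::field fa set) \<subseteq> Bk k"
proof -
  define J :: "'k fa set" where "J = {f \<in> Aalg. \<forall>a. fmult (mono a) f \<in> Bk k}"
  have "is_ideal J"
    unfolding J_def using fa_subspace_Bk Bk_fmult_right Aalg_subset_A1
    by (blast intro: is_ideal_left_monomial_stable)
  moreover have "w \<in> J" if w: "w \<in> Wall k (2 * 100 ^ (k\<^sup>2))" for w
  proof -
    have "w \<in> Aalg"
      using Wall_Ahom[OF w] Ahom_subset_Aalg[of "2 * 100 ^ (k\<^sup>2)"] by auto
    then show ?thesis
      unfolding J_def using fmult_mono_Wall_Bk[OF assms w] by blast
  qed
  ultimately have "Ik k \<subseteq> J"
    unfolding Ik_def ideal_gen_def by blast
  moreover have "f \<in> Bk k" if "f \<in> J" for f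
  proof -
    have "fmult (mono []) f \<in> Bk k"
      using that unfolding J_def by blast
    then show ?thesis
      by (simp only: fmult_mono_Nil)
  qed
  ultimately show ?thesis
    by blast
qed

end
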